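(* Let $V$ be a real symmetric positive definite $2n\times2n$ matrix and let $\nu_{\min}(V)$ be its smallest symplectic eigenvalue. Then $$\nu_{\min}(V)=\max\{\lambda\ge0: V\ge i\lambda\Omega\}=\min\{\mathrm{Tr}(WV): W\ \text{a }2n\times2n\text{ complex Hermitian matrix},\ W\ge0,\ \mathrm{Tr}(W\,i\Omega)=1\}.$$
   Context: $\Omega=\begin{pmatrix}0&\mathbb 1_n\\-\mathbb 1_n&0\end{pmatrix}$. By Williamson's theorem, for every real symmetric positive definite $2n\times2n$ matrix $V$ there is a real matrix $S$ with $S\Omega S^T=\Omega$ (symplectic) such that $SVS^T=D\oplus D$ with $D=\mathrm{diag}(\nu_1(V),\dots,\nu_n(V))$, $\nu_j(V)>0$; the $\nu_j(V)$ are the symplectic eigenvalues of $V$. Matrix inequalities refer to the positive semidefinite (Löwner) order on Hermitian matrices. *)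

theory Defs
  imports "Jordan_Normal_Form.Schur_Decomposition"
begin

definition Omega :: "nat \<Rightarrow> real mat" where
  "Omega n = four_block_mat (0\<^sub>m n n) (1\<^sub>m n) (- 1\<^sub>m n) (0\<^sub>m n n)"

definition real_sym_posdef :: "nat \<Rightarrow> real mat \<Rightarrow> bool" where
  "real_sym_posdef m V \<longleftrightarrow> V \<in> carrier_mat m m \<and> transpose_mat V = V \<and>
     (\<forall>v \<in> carrier_vec m. v \<noteq> 0\<^sub>v m \<longrightarrow> v \<bullet> (V *\<^sub>v v) > 0)"

definition symplectic :: "nat \<Rightarrow> real mat \<Rightarrow> bool" where
  "symplectic n S \<longleftrightarrow> S \<in> carrier_mat (2*n) (2*n) \<and>
     S * Omega n * transpose_mat S = Omega n"

definition diag_of :: "nat \<Rightarrow> (nat \<Rightarrow> real) \<Rightarrow> real mat" where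
  "diag_of n d = mat n n (\<lambda>(i,j). if i = j then d i else 0)"

text \<open>(S, d) is a Williamson normal form of V: S symplectic, S V S^T = D (+) D,
  D = diag(d_1..d_n), all d_j > 0. The d_j are then the symplectic eigenvalues of V.\<close>
definition williamson :: "nat \<Rightarrow> real mat \<Rightarrow> real mat \<Rightarrow> (nat \<Rightarrow> real) \<Rightarrow> bool" where
  "williamson n V S d \<longleftrightarrow> symplectic n S \<and> (\<forall>j<n. d j > 0) \<and>
     S * V * transpose_mat S = four_block_mat (diag_of n d) (0\<^sub>m n n) (0\<^sub>m n n) (diag_of n d)"

definition hermitian :: "nat \<Rightarrow> complex mat \<Rightarrow> bool" where
  "hermitian m A \<longleftrightarrow> A \<in> carrier_mat m m \<and> mat_adjoint A = A"

text \<open>Positive semidefinite (A \<ge> 0 in the Loewner order): Hermitian with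
  nonnegative quadratic form v^* A v (which is real for Hermitian A).\<close>
definition psd :: "nat \<Rightarrow> complex mat \<Rightarrow> bool" where
  "psd m A \<longleftrightarrow> hermitian m A \<and>
     (\<forall>v \<in> carrier_vec m. Re (conjugate v \<bullet> (A *\<^sub>v v)) \<ge> 0)"

definition mtrace :: "'a::comm_ring_1 mat \<Rightarrow> 'a" where
  "mtrace A = (\<Sum>i<dim_row A. A $$ (i,i))"

abbreviation cmat :: "real mat \<Rightarrow> complex mat" where
  "cmat A \<equiv> map_mat complex_of_real A"

end

theory Submission
  imports Defs
begin

text \<open>
  Let \<open>E = D \<oplus> D\<close> be the Williamson form, so \<open>V = R E R\<^sup>T\<close> and \<open>\<Omega> = R \<Omega> R\<^sup>T\<close>
  for \<open>R = S\<^sup>-\<^sup>1\<close>. For \<open>W \<ge> 0\<close> the congruence \<open>W \<mapsto> R\<^sup>T W R\<close> reduces both traces to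
  the normal form, where \<open>Tr (W E) = \<Sum>j. d j (W(j,j) + W(j+n,j+n))\<close> and
  \<open>i Tr (W \<Omega>) = \<Sum>j. i (W(j+n,j) - W(j,j+n))\<close>. Positivity of the \<open>2 \<times> 2\<close> principal
  block on \<open>{j, j+n}\<close> bounds each term of the second sum by the diagonal term of the first,
  hence \<open>\<nu> Re (i Tr (W \<Omega>)) \<le> Re (Tr (W V))\<close> whenever \<open>0 \<le> \<nu> \<le> d j\<close> for all \<open>j\<close>.
  For \<open>W = v v\<^sup>*\<close> this says \<open>V \<ge> i \<nu> \<Omega>\<close>; under \<open>Tr (W i\<Omega>) = 1\<close> it bounds the dual
  problem from below. Both bounds are attained at \<open>u = S\<^sup>T (e j - i e (j+n))\<close> for an index
  \<open>j\<close> with \<open>d j\<close> minimal.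
\<close>

lemma sum_lessThan_double:
  fixes f :: "nat \<Rightarrow> 'a::comm_monoid_add"
  shows "(\<Sum>i<2*n. f i) = (\<Sum>j<n. f j) + (\<Sum>j<n. f (j+n))"
proof -
  have split: "{..<2*n} = {..<n} \<union> {0+n..<n+n}" by auto
  have "(\<Sum>i<2*n. f i) = (\<Sum>j<n. f j) + (\<Sum>j\<in>{0+n..<n+n}. f j)"
    unfolding split by (rule sum.union_disjoint) auto
  also have "(\<Sum>j\<in>{0+n..<n+n}. f j) = (\<Sum>j\<in>{0..<n}. f (j+n))"
    by (rule sum.shift_bounds_nat_ivl)
  finally show ?thesis by (simp add: lessThan_atLeast0)
qed

lemma mtrace_mult:
  fixes A B :: "'a::comm_ring_1 mat"
  assumes "A \<in> carrier_mat m m" "B \<in> carrier_mat m m"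
  shows "mtrace (A * B) = (\<Sum>i<m. \<Sum>k<m. A $$ (i,k) * B $$ (k,i))"
  using assms by (simp add: mtrace_def scalar_prod_def lessThan_atLeast0)

lemma mtrace_mult_comm:
  fixes A B :: "'a::comm_ring_1 mat"
  assumes "A \<in> carrier_mat m m" "B \<in> carrier_mat m m"
  shows "mtrace (A * B) = mtrace (B * A)"
  unfolding mtrace_mult[OF assms] mtrace_mult[OF assms(2,1)]
  by (subst sum.swap) (simp add: mult.commute)

lemma mtrace_smult:
  fixes A :: "'a::comm_ring_1 mat"
  assumes "A \<in> carrier_mat m m"
  shows "mtrace (c \<cdot>\<^sub>m A) = c * mtrace A"
  using assms by (simp add: mtrace_def sum_distrib_left)

lemma smult_mult_mat_vec:
  fixes A :: "'a::comm_ring_1 mat"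
  assumes "A \<in> carrier_mat nr nc" "v \<in> carrier_vec nc"
  shows "(c \<cdot>\<^sub>m A) *\<^sub>v v = c \<cdot>\<^sub>v (A *\<^sub>v v)"
  using assms by (auto intro!: eq_vecI simp: scalar_prod_def sum_distrib_left ac_simps)

definition qform :: "complex mat \<Rightarrow> complex vec \<Rightarrow> complex" where
  "qform X v = conjugate v \<bullet> (X *\<^sub>v v)"

definition outer_prod :: "complex vec \<Rightarrow> complex mat" where
  "outer_prod u = mat (dim_vec u) (dim_vec u) (\<lambda>(a,b). u $ a * cnj (u $ b))"

lemma outer_prod_carrier [simp]: "u \<in> carrier_vec m \<Longrightarrow> outer_prod u \<in> carrier_mat m m"
  by (simp add: outer_prod_def)

lemma mtrace_outer_prod_mult:
  assumes "u \<in> carrier_vec m" "X \<in> carrier_mat m m"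
  shows "mtrace (outer_prod u * X) = qform X u"
proof -
  have "mtrace (outer_prod u * X) = (\<Sum>i<m. \<Sum>k<m. u$i * cnj (u$k) * X$$(k,i))"
    using assms by (subst mtrace_mult[of _ m]) (auto simp: outer_prod_def)
  also have "\<dots> = (\<Sum>k<m. \<Sum>i<m. cnj (u$k) * (X$$(k,i) * u$i))"
    by (subst sum.swap) (simp add: ac_simps)
  also have "\<dots> = qform X u"
    using assms by (simp add: qform_def scalar_prod_def lessThan_atLeast0 sum_distrib_left)
  finally show ?thesis .
qed

lemma mtrace_smult_outer_prod_mult:
  assumes "u \<in> carrier_vec m" "X \<in> carrier_mat m m"
  shows "mtrace ((c \<cdot>\<^sub>m outer_prod u) * X) = c * qform X u"
proof -
  have "(c \<cdot>\<^sub>m outer_prod u) * X = c \<cdot>\<^sub>m (outer_prod u * X)"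
    using assms by (simp add: mult_smult_assoc_mat[of _ m m])
  moreover have "outer_prod u * X \<in> carrier_mat m m"
    using assms by (metis mult_carrier_mat outer_prod_carrier)
  ultimately show ?thesis
    using assms by (simp add: mtrace_smult[of _ m] mtrace_outer_prod_mult)
qed

lemma qform_outer_prod_nonneg:
  assumes "u \<in> carrier_vec m" "v \<in> carrier_vec m"
  shows "Re (qform (outer_prod u) v) \<ge> 0"
proof -
  define z where "z = (\<Sum>a<m. cnj (v$a) * u$a)"
  have "qform (outer_prod u) v = (\<Sum>a<m. \<Sum>b<m. (cnj (v$a) * u$a) * (cnj (u$b) * v$b))"
    using assms by (simp add: qform_def outer_prod_def scalar_prod_def lessThan_atLeast0
        sum_distrib_left ac_simps)
  also have "\<dots> = z * cnj z"
    unfolding z_def sum_product cnj_sum by (simp add: ac_simps)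
  finally show ?thesis
    by (simp add: complex_mult_cnj)
qed

lemma mat_adjoint_index:
  "A \<in> carrier_mat m m \<Longrightarrow> i < m \<Longrightarrow> j < m \<Longrightarrow> mat_adjoint A $$ (i,j) = cnj (A $$ (j,i))"
  by (simp add: mat_adjoint_def mat_of_rows_def)

lemma hermitian_outer_prod: "u \<in> carrier_vec m \<Longrightarrow> hermitian m (outer_prod u)"
  by (auto simp: hermitian_def mat_adjoint_def mat_of_rows_def outer_prod_def)

lemma qform_diff_smult:
  assumes "X \<in> carrier_mat m m" "Y \<in> carrier_mat m m" "v \<in> carrier_vec m"
  shows "qform (X - c \<cdot>\<^sub>m Y) v = qform X v - c * qform Y v"
  using assms by (simp add: qform_def smult_mult_mat_vec[of _ m m] minus_mult_distrib_mat_vec[of _ m m]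
      scalar_prod_minus_distrib[of _ m])

lemma qform_smult:
  assumes "X \<in> carrier_mat m m" "v \<in> carrier_vec m"
  shows "qform (c \<cdot>\<^sub>m X) v = c * qform X v"
  using assms by (simp add: qform_def smult_mult_mat_vec[of _ m m])

text \<open>The positivity half of \<open>psd\<close> without hermiticity, which is all the trace bound needs.\<close>

definition nonneg_form :: "nat \<Rightarrow> complex mat \<Rightarrow> bool" where
  "nonneg_form m W \<longleftrightarrow> W \<in> carrier_mat m m \<and> (\<forall>v \<in> carrier_vec m. Re (qform W v) \<ge> 0)"

lemma psd_iff_hermitian_nonneg_form: "psd m W \<longleftrightarrow> hermitian m W \<and> nonneg_form m W"
  by (auto simp: psd_def hermitian_def nonneg_form_def qform_def)

lemma psd_outer_prod: "u \<in> carrier_vec m \<Longrightarrow> psd m (outer_prod u)"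
  by (auto simp: psd_iff_hermitian_nonneg_form nonneg_form_def hermitian_outer_prod
      qform_outer_prod_nonneg)

lemma psd_smult:
  assumes "psd m W" "c \<ge> 0"
  shows "psd m (complex_of_real c \<cdot>\<^sub>m W)"
proof -
  have W: "W \<in> carrier_mat m m" "mat_adjoint W = W"
    using assms(1) by (auto simp: psd_def hermitian_def)
  have "mat_adjoint (complex_of_real c \<cdot>\<^sub>m W) = complex_of_real c \<cdot>\<^sub>m W"
  proof (rule eq_matI)
    fix i j assume "i < dim_row (complex_of_real c \<cdot>\<^sub>m W)" "j < dim_col (complex_of_real c \<cdot>\<^sub>m W)"
    then have ij: "i < m" "j < m" using W by auto
    have "cnj (W $$ (j, i)) = W $$ (i, j)"
      using mat_adjoint_index[OF W(1) ij] W(2) by simp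
    then show "mat_adjoint (complex_of_real c \<cdot>\<^sub>m W) $$ (i, j) = (complex_of_real c \<cdot>\<^sub>m W) $$ (i, j)"
      using W ij by (simp add: mat_adjoint_index[of _ m])
  qed (use W in \<open>auto simp: mat_adjoint_def mat_of_rows_def\<close>)
  moreover have "Re (qform (complex_of_real c \<cdot>\<^sub>m W) v) \<ge> 0" if "v \<in> carrier_vec m" for v
    using assms that W by (simp add: qform_smult[of _ m] psd_iff_hermitian_nonneg_form nonneg_form_def)
  ultimately show ?thesis
    using W by (auto simp: psd_iff_hermitian_nonneg_form hermitian_def nonneg_form_def)
qed

lemma conjugate_of_real_mult_mat_vec:
  assumes "C \<in> carrier_mat m m" "v \<in> carrier_vec m"
  shows "conjugate (cmat C *\<^sub>v v) = cmat C *\<^sub>v conjugate v"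
  using assms by (intro eq_vecI) (auto simp: scalar_prod_def cnj_sum)

lemma qform_congruence:
  assumes C: "C \<in> carrier_mat m m" and X: "X \<in> carrier_mat m m" and v: "v \<in> carrier_vec m"
  shows "qform (cmat (transpose_mat C) * X * cmat C) v = qform X (cmat C *\<^sub>v v)"
proof -
  define w where "w = cmat C *\<^sub>v v"
  define y where "y = X *\<^sub>v w"
  have w: "w \<in> carrier_vec m" using C v by (simp add: w_def)
  have y: "y \<in> carrier_vec m" using X w by (simp add: y_def)
  have "(cmat (transpose_mat C) * X * cmat C) *\<^sub>v v = cmat (transpose_mat C) *\<^sub>v y"
    using C X v by (simp add: y_def w_def assoc_mult_mat_vec[of _ m m _ m])
  then have "qform (cmat (transpose_mat C) * X * cmat C) v = conjugate v \<bullet> (cmat (transpose_mat C) *\<^sub>v y)"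
    by (simp add: qform_def)
  also have "\<dots> = (transpose_mat (cmat C) *\<^sub>v y) \<bullet> conjugate v"
    using C y v by (subst comm_scalar_prod[of _ m]) (auto simp: map_mat_transpose)
  also have "\<dots> = y \<bullet> (cmat C *\<^sub>v conjugate v)"
    using C y v by (subst transpose_vec_mult_scalar[of _ m m]) auto
  also have "\<dots> = y \<bullet> conjugate w"
    using conjugate_of_real_mult_mat_vec[OF C v] by (simp add: w_def)
  also have "\<dots> = conjugate w \<bullet> y" using y w by (subst comm_scalar_prod[of _ m]) auto
  finally show ?thesis by (simp add: qform_def y_def w_def)
qed

lemma nonneg_form_congruence:
  assumes "nonneg_form m W" "C \<in> carrier_mat m m"
  shows "nonneg_form m (cmat (transpose_mat C) * W * cmat C)"
  using assms by (auto simp: nonneg_form_def qform_congruence)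

lemma mtrace_mult_congruence:
  fixes W C Y D :: "'a::comm_ring_1 mat"
  assumes "W \<in> carrier_mat m m" "C \<in> carrier_mat m m" "Y \<in> carrier_mat m m" "D \<in> carrier_mat m m"
  shows "mtrace (W * (C * Y * D)) = mtrace ((D * W * C) * Y)"
proof -
  have "W * (C * Y * D) = (W * C * Y) * D" using assms by (simp add: assoc_mult_mat[of _ m m _ m _ m])
  then have "mtrace (W * (C * Y * D)) = mtrace (D * (W * C * Y))"
    using assms by (simp add: mtrace_mult_comm[of _ m])
  also have "D * (W * C * Y) = (D * W * C) * Y" using assms by (simp add: assoc_mult_mat[of _ m m _ m _ m])
  finally show ?thesis .
qed

lemma qform_two_entries:
  assumes X: "X \<in> carrier_mat m m" and ab: "a < m" "b < m" "a \<noteq> b"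
  shows "qform X (vec m (\<lambda>k. if k = a then 1 else if k = b then c else 0)) =
     X$$(a,a) + c * X$$(a,b) + cnj c * X$$(b,a) + cnj c * c * X$$(b,b)"
proof -
  let ?v = "vec m (\<lambda>k. if k = a then 1 else if k = b then c else 0)"
  have two: "(\<Sum>l\<in>{0..<m}. f l * (if l = a then p else if l = b then q else 0)) = f a * p + f b * q"
    for f :: "nat \<Rightarrow> complex" and p q
    using ab by (simp add: if_distrib[of "(*) _"] sum.If_cases Int_absorb1 sum.remove)
  have "(X *\<^sub>v ?v) $ k = X$$(k,a) + X$$(k,b) * c" if "k < m" for k
    using X that two[of "\<lambda>l. X $$ (k, l)" 1 c] by (simp add: scalar_prod_def)
  then have "qform X ?v = (\<Sum>k\<in>{0..<m}.
      (X$$(k,a) + X$$(k,b) * c) * (if k = a then 1 else if k = b then cnj c else 0))"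
    using X by (auto simp: qform_def scalar_prod_def mult.commute intro!: sum.cong)
  also have "\<dots> = (X$$(a,a) + X$$(a,b) * c) + (X$$(b,a) + X$$(b,b) * c) * cnj c"
    by (simp add: two)
  finally show ?thesis by (simp add: algebra_simps)
qed

lemma Omega_carrier: "Omega n \<in> carrier_mat (2*n) (2*n)"
  by (simp add: Omega_def mult_2)

lemma Omega_index:
  assumes "i < 2*n" "j < 2*n"
  shows "Omega n $$ (i,j) = (if i < n then (if j = i+n then 1 else 0) else (if j = i-n then -1 else 0))"
  using assms by (auto simp: Omega_def)

lemma Omega_mult_Omega: "Omega n * Omega n = - 1\<^sub>m (2*n)"
proof (rule eq_matI)
  fix i j assume "i < dim_row (- 1\<^sub>m (2*n) :: real mat)" "j < dim_col (- 1\<^sub>m (2*n) :: real mat)"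
  then have i: "i < 2*n" and j: "j < 2*n" by auto
  let ?k = "if i < n then i + n else i - n"
  have "(Omega n * Omega n) $$ (i,j) = (\<Sum>k\<in>{0..<2*n}. Omega n $$ (i,k) * Omega n $$ (k,j))"
    using i j Omega_carrier[of n] by (simp add: scalar_prod_def)
  also have "\<dots> = (\<Sum>k\<in>{0..<2*n}. if k = ?k then Omega n $$ (i,?k) * Omega n $$ (?k,j) else 0)"
    using i j by (intro sum.cong) (auto simp: Omega_index)
  also have "\<dots> = (- 1\<^sub>m (2*n)) $$ (i,j)"
    using i j by (auto simp: Omega_index)
  finally show "(Omega n * Omega n) $$ (i,j) = (- 1\<^sub>m (2*n)) $$ (i,j)" .
qed (auto simp: Omega_def mult_2)

lemma symplectic_inverse:
  assumes "symplectic n S"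
  shows "- (Omega n * transpose_mat S * Omega n) * S = 1\<^sub>m (2*n)"
proof -
  have S: "S \<in> carrier_mat (2*n) (2*n)" "S * Omega n * transpose_mat S = Omega n"
    using assms by (auto simp: symplectic_def)
  have R: "Omega n * transpose_mat S * Omega n \<in> carrier_mat (2*n) (2*n)"
    using S Omega_carrier[of n] by auto
  have "S * - (Omega n * transpose_mat S * Omega n) = - ((S * Omega n * transpose_mat S) * Omega n)"
    using S(1) R Omega_carrier[of n]
    by (simp add: assoc_mult_mat[of _ "2*n" "2*n" _ "2*n" _ "2*n"])
  also have "\<dots> = 1\<^sub>m (2*n)"
    by (simp add: S(2) Omega_mult_Omega)
  finally have "S * - (Omega n * transpose_mat S * Omega n) = 1\<^sub>m (2*n)" .
  then show ?thesis
    using mat_mult_left_right_inverse[OF S(1)] R by auto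
qed

lemma mult_inverse_congruence_cancel:
  fixes A A' B B' Y :: "'a::semiring_1 mat"
  assumes "A \<in> carrier_mat m m" "A' \<in> carrier_mat m m" "B \<in> carrier_mat m m" "B' \<in> carrier_mat m m"
    "Y \<in> carrier_mat m m" "A' * A = 1\<^sub>m m" "B * B' = 1\<^sub>m m"
  shows "A' * (A * Y * B) * B' = Y"
proof -
  have "A' * (A * Y * B) * B' = (A' * A) * Y * (B * B')"
    using assms(1-5) by (simp add: assoc_mult_mat[of _ m m _ m _ m])
  then show ?thesis using assms by simp
qed

definition williamson_form :: "nat \<Rightarrow> (nat \<Rightarrow> real) \<Rightarrow> real mat" where
  "williamson_form n d = four_block_mat (diag_of n d) (0\<^sub>m n n) (0\<^sub>m n n) (diag_of n d)"

lemma williamson_form_carrier: "williamson_form n d \<in> carrier_mat (2*n) (2*n)"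
  by (simp add: williamson_form_def diag_of_def mult_2)

lemma williamson_form_index:
  assumes "i < 2*n" "j < 2*n"
  shows "williamson_form n d $$ (i,j) = (if i = j then d (if i < n then i else i-n) else 0)"
  using assms by (auto simp: williamson_form_def diag_of_def)

lemma williamson_congruence_inverse:
  assumes "williamson n V S d" "V \<in> carrier_mat (2*n) (2*n)"
  obtains R where "R \<in> carrier_mat (2*n) (2*n)"
    "V = R * williamson_form n d * transpose_mat R" "Omega n = R * Omega n * transpose_mat R"
proof
  define R where "R = - (Omega n * transpose_mat S * Omega n)"
  have S: "S \<in> carrier_mat (2*n) (2*n)" "symplectic n S"
    "S * V * transpose_mat S = williamson_form n d"
    using assms(1) by (auto simp: williamson_def symplectic_def williamson_form_def)
  show R: "R \<in> carrier_mat (2*n) (2*n)"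
    using S Omega_carrier[of n] by (auto simp: R_def)
  have RS: "R * S = 1\<^sub>m (2*n)"
    unfolding R_def by (rule symplectic_inverse[OF S(2)])
  then have "transpose_mat S * transpose_mat R = 1\<^sub>m (2*n)"
    using R S by (metis transpose_mult transpose_one)
  note cancel = mult_inverse_congruence_cancel[OF S(1) R transpose_carrier_mat[THEN iffD2, OF S(1)]
      transpose_carrier_mat[THEN iffD2, OF R] _ RS this]
  show "V = R * williamson_form n d * transpose_mat R"
    using cancel[OF assms(2)] S(3) by simp
  show "Omega n = R * Omega n * transpose_mat R"
    using cancel[OF Omega_carrier] S(2) by (simp add: symplectic_def)
qed

lemma mtrace_mult_williamson_form:
  assumes "W \<in> carrier_mat (2*n) (2*n)"
  shows "mtrace (W * cmat (williamson_form n d)) =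
    (\<Sum>j<n. complex_of_real (d j) * (W $$ (j,j) + W $$ (j+n,j+n)))"
proof -
  have diag: "(\<Sum>k<2*n. W $$ (i,k) * complex_of_real (williamson_form n d $$ (k,i))) =
      W $$ (i,i) * complex_of_real (d (if i < n then i else i-n))" if "i < 2*n" for i
  proof -
    have "(\<Sum>k<2*n. W $$ (i,k) * complex_of_real (williamson_form n d $$ (k,i))) =
        (\<Sum>k<2*n. if k = i then W $$ (i,i) * complex_of_real (d (if i < n then i else i-n)) else 0)"
      using that by (intro sum.cong) (auto simp: williamson_form_index)
    then show ?thesis using that by simp
  qed
  have "mtrace (W * cmat (williamson_form n d)) =
      (\<Sum>i<2*n. W $$ (i,i) * complex_of_real (d (if i < n then i else i-n)))"
    using assms williamson_form_carrier[of n d] by (simp add: mtrace_mult[of _ "2*n"] diag)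
  also have "\<dots> = (\<Sum>j<n. complex_of_real (d j) * (W $$ (j,j) + W $$ (j+n,j+n)))"
    by (subst sum_lessThan_double, subst sum.distrib[symmetric], intro sum.cong)
      (auto simp: algebra_simps)
  finally show ?thesis .
qed

lemma mtrace_mult_Omega:
  assumes "W \<in> carrier_mat (2*n) (2*n)"
  shows "mtrace (W * cmat (Omega n)) = (\<Sum>j<n. W $$ (j+n,j) - W $$ (j,j+n))"
proof -
  have upper: "(\<Sum>k<2*n. W $$ (j,k) * complex_of_real (Omega n $$ (k,j))) = - W $$ (j,j+n)"
    and lower: "(\<Sum>k<2*n. W $$ (j+n,k) * complex_of_real (Omega n $$ (k,j+n))) = W $$ (j+n,j)"
    if "j < n" for j
  proof -
    have "(\<Sum>k<2*n. W $$ (j,k) * complex_of_real (Omega n $$ (k,j))) =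
        (\<Sum>k<2*n. if k = j+n then - W $$ (j,j+n) else 0)"
      using that by (intro sum.cong) (auto simp: Omega_index)
    moreover have "(\<Sum>k<2*n. W $$ (j+n,k) * complex_of_real (Omega n $$ (k,j+n))) =
        (\<Sum>k<2*n. if k = j then W $$ (j+n,j) else 0)"
      using that by (intro sum.cong) (auto simp: Omega_index)
    ultimately show "(\<Sum>k<2*n. W $$ (j,k) * complex_of_real (Omega n $$ (k,j))) = - W $$ (j,j+n)"
      and "(\<Sum>k<2*n. W $$ (j+n,k) * complex_of_real (Omega n $$ (k,j+n))) = W $$ (j+n,j)"
      using that by simp_all
  qed
  have "mtrace (W * cmat (Omega n)) =
      (\<Sum>i<2*n. \<Sum>k<2*n. W $$ (i,k) * complex_of_real (Omega n $$ (k,i)))"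
    using assms Omega_carrier[of n] by (simp add: mtrace_mult[of _ "2*n"])
  also have "\<dots> = (\<Sum>j<n. - W $$ (j,j+n)) + (\<Sum>j<n. W $$ (j+n,j))"
    by (subst sum_lessThan_double, intro arg_cong2[where f="(+)"] sum.cong) (auto simp: upper lower)
  also have "\<dots> = (\<Sum>j<n. W $$ (j+n,j) - W $$ (j,j+n))"
    by (simp add: sum_subtractf sum_negf)
  finally show ?thesis .
qed

lemma nonneg_form_symplectic_pair:
  assumes W: "nonneg_form (2*n) W" and j: "j < n"
  shows "\<bar>Re (\<i> * (W $$ (j+n,j) - W $$ (j,j+n)))\<bar> \<le> Re (W $$ (j,j) + W $$ (j+n,j+n))"
proof -
  have Wc: "W \<in> carrier_mat (2*n) (2*n)" using W by (simp add: nonneg_form_def)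
  have ab: "j < 2*n" "j+n < 2*n" "j \<noteq> j+n" using j by auto
  have "0 \<le> Re (qform W (vec (2*n) (\<lambda>k. if k = j then 1 else if k = j+n then c else 0)))" for c
    using W by (auto simp: nonneg_form_def)
  note pair = this[unfolded qform_two_entries[OF Wc ab]]
  from pair[of \<i>] pair[of "-\<i>"] show ?thesis
    by (simp add: algebra_simps)
qed

lemma williamson_form_trace_bound:
  assumes W: "nonneg_form (2*n) W" and nu: "0 \<le> nu" "\<forall>j<n. nu \<le> d j"
  shows "nu * Re (\<i> * mtrace (W * cmat (Omega n))) \<le> Re (mtrace (W * cmat (williamson_form n d)))"
proof -
  have Wc: "W \<in> carrier_mat (2*n) (2*n)" using W by (simp add: nonneg_form_def)
  define p where "p j = Re (W $$ (j,j) + W $$ (j+n,j+n))" for j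
  define t where "t j = Re (\<i> * (W $$ (j+n,j) - W $$ (j,j+n)))" for j
  have "nu * t j \<le> d j * p j" if "j < n" for j
  proof -
    have "\<bar>t j\<bar> \<le> p j"
      unfolding t_def p_def using nonneg_form_symplectic_pair[OF W that] .
    then have "nu * t j \<le> nu * p j" "0 \<le> p j"
      using nu by (auto intro: mult_left_mono)
    moreover have "nu * p j \<le> d j * p j"
      using nu that \<open>0 \<le> p j\<close> by (simp add: mult_right_mono)
    ultimately show ?thesis by linarith
  qed
  then have "nu * (\<Sum>j<n. t j) \<le> (\<Sum>j<n. d j * p j)"
    unfolding sum_distrib_left by (intro sum_mono) simp
  then show ?thesis
    by (simp add: mtrace_mult_Omega[OF Wc] mtrace_mult_williamson_form[OF Wc] t_def p_def
        sum_distrib_left Re_sum)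
qed

lemma williamson_trace_bound:
  assumes wil: "williamson n V S d" and V: "V \<in> carrier_mat (2*n) (2*n)"
    and W: "nonneg_form (2*n) W" and nu: "0 \<le> nu" "\<forall>j<n. nu \<le> d j"
  shows "nu * Re (\<i> * mtrace (W * cmat (Omega n))) \<le> Re (mtrace (W * cmat V))"
proof -
  obtain R where R: "R \<in> carrier_mat (2*n) (2*n)"
    and VR: "V = R * williamson_form n d * transpose_mat R"
    and OR: "Omega n = R * Omega n * transpose_mat R"
    using williamson_congruence_inverse[OF wil V] by blast
  define W' where "W' = cmat (transpose_mat R) * W * cmat R"
  have Wc: "W \<in> carrier_mat (2*n) (2*n)" using W by (simp add: nonneg_form_def)
  have "mtrace (W * cmat (R * Y * transpose_mat R)) = mtrace (W' * cmat Y)"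
    if "Y \<in> carrier_mat (2*n) (2*n)" for Y
  proof -
    have "cmat (R * Y * transpose_mat R) = cmat R * cmat Y * cmat (transpose_mat R)"
      using that R by (simp add: of_real_hom.mat_hom_mult[of _ "2*n" "2*n" _ "2*n"])
    then show ?thesis
      unfolding W'_def by (rule ssubst, intro mtrace_mult_congruence) (use that R Wc in auto)
  qed
  from this[OF williamson_form_carrier] this[OF Omega_carrier] 
  have "mtrace (W * cmat V) = mtrace (W' * cmat (williamson_form n d))"
    "mtrace (W * cmat (Omega n)) = mtrace (W' * cmat (Omega n))"
    using VR OR by metis+
  moreover have "nonneg_form (2*n) W'"
    unfolding W'_def by (rule nonneg_form_congruence[OF W R])
  ultimately show ?thesis
    using williamson_form_trace_bound[OF _ nu] by simp
qed

text \<open>\<open>w = e j - i e (j+n)\<close> satisfies \<open>i \<Omega> w = w\<close> and \<open>(D \<oplus> D) w = d j w\<close>, so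
  \<open>u = S\<^sup>T w\<close> is an isotropic vector of \<open>V - i (d j) \<Omega>\<close>.\<close>

lemma williamson_witness:
  assumes wil: "williamson n V S d" and V: "V \<in> carrier_mat (2*n) (2*n)" and j: "j < n"
  obtains u where "u \<in> carrier_vec (2*n)" "qform (cmat V) u = 2 * complex_of_real (d j)"
    "qform (cmat (Omega n)) u = - 2 * \<i>"
proof -
  define w where "w = vec (2*n) (\<lambda>k. if k = j then 1 else if k = j+n then -\<i> else (0::complex))"
  define u where "u = cmat (transpose_mat S) *\<^sub>v w"
  have S: "S \<in> carrier_mat (2*n) (2*n)" "S * Omega n * transpose_mat S = Omega n"
    "S * V * transpose_mat S = williamson_form n d"
    using wil by (auto simp: williamson_def symplectic_def williamson_form_def)
  have ST: "transpose_mat S \<in> carrier_mat (2*n) (2*n)" using S by simp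
  have ab: "j < 2*n" "j+n < 2*n" "j \<noteq> j+n" using j by auto
  have transfer: "qform (cmat Y) u = qform (cmat (S * Y * transpose_mat S)) w"
    if "Y \<in> carrier_mat (2*n) (2*n)" for Y
  proof -
    have "cmat (S * Y * transpose_mat S) = cmat S * cmat Y * cmat (transpose_mat S)"
      using that S by (simp add: of_real_hom.mat_hom_mult[of _ "2*n" "2*n" _ "2*n"])
    then show ?thesis
      using qform_congruence[OF ST _ vec_carrier, of "cmat Y"] that by (simp add: u_def w_def)
  qed
  have "u \<in> carrier_vec (2*n)" using ST by (simp add: u_def w_def)
  moreover have "qform (cmat V) u = 2 * complex_of_real (d j)"
    using transfer[OF V] williamson_form_carrier[of n d] j
    by (simp add: S(3) w_def qform_two_entries[OF _ ab] williamson_form_index)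
  moreover have "qform (cmat (Omega n)) u = - 2 * \<i>"
    using transfer[OF Omega_carrier] Omega_carrier[of n] j
    by (simp add: S(2) w_def qform_two_entries[OF _ ab] Omega_index)
  ultimately show ?thesis using that by blast
qed

lemma hermitian_minus_i_smult_Omega:
  assumes "V \<in> carrier_mat (2*n) (2*n)" "transpose_mat V = V"
  shows "hermitian (2*n) (cmat V - (\<i> * complex_of_real l) \<cdot>\<^sub>m cmat (Omega n))"
proof -
  let ?M = "cmat V - (\<i> * complex_of_real l) \<cdot>\<^sub>m cmat (Omega n)"
  have M: "?M \<in> carrier_mat (2*n) (2*n)" using assms Omega_carrier[of n] by auto
  have "mat_adjoint ?M = ?M"
  proof (rule eq_matI)
    fix i j assume "i < dim_row ?M" "j < dim_col ?M"
    then have ij: "i < 2*n" "j < 2*n" using M by auto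
    have "V $$ (j,i) = V $$ (i,j)"
      using assms ij by (metis carrier_matD index_transpose_mat(1))
    then show "mat_adjoint ?M $$ (i,j) = ?M $$ (i,j)"
      using assms ij Omega_carrier[of n] by (auto simp: mat_adjoint_index[OF M] Omega_index)
  qed (use M Omega_carrier[of n] in \<open>auto simp: mat_adjoint_def mat_of_rows_def\<close>)
  then show ?thesis using M by (simp add: hermitian_def)
qed

lemma psd_minus_i_smult_Omega:
  assumes wil: "williamson n V S d" and V: "V \<in> carrier_mat (2*n) (2*n)" "transpose_mat V = V"
    and l: "0 \<le> l" "\<forall>j<n. l \<le> d j"
  shows "psd (2*n) (cmat V - (\<i> * complex_of_real l) \<cdot>\<^sub>m cmat (Omega n))"
proof -
  have "Re (qform (cmat V - (\<i> * complex_of_real l) \<cdot>\<^sub>m cmat (Omega n)) v) \<ge> 0"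
    if v: "v \<in> carrier_vec (2*n)" for v
  proof -
    have "nonneg_form (2*n) (outer_prod v)"
      using psd_outer_prod[OF v] by (simp add: psd_iff_hermitian_nonneg_form)
    from williamson_trace_bound[OF wil V(1) this l] show ?thesis
      using v V(1) Omega_carrier[of n]
      by (simp add: mtrace_outer_prod_mult qform_diff_smult[of _ "2*n"])
  qed
  then show ?thesis
    using hermitian_minus_i_smult_Omega[OF V] Omega_carrier[of n] V(1)
    by (auto simp: psd_iff_hermitian_nonneg_form nonneg_form_def)
qed

lemma psd_minus_i_smult_Omega_imp_le:
  assumes wil: "williamson n V S d" and V: "V \<in> carrier_mat (2*n) (2*n)"
    and psd: "psd (2*n) (cmat V - (\<i> * complex_of_real l) \<cdot>\<^sub>m cmat (Omega n))" and j: "j < n"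
  shows "l \<le> d j"
proof -
  obtain u where u: "u \<in> carrier_vec (2*n)" "qform (cmat V) u = 2 * complex_of_real (d j)"
    "qform (cmat (Omega n)) u = - 2 * \<i>"
    using williamson_witness[OF wil V j] .
  have "0 \<le> Re (qform (cmat V - (\<i> * complex_of_real l) \<cdot>\<^sub>m cmat (Omega n)) u)"
    using psd u(1) by (simp add: psd_iff_hermitian_nonneg_form nonneg_form_def)
  also have "\<dots> = 2 * d j - 2 * l"
    using V Omega_carrier[of n] u by (simp add: qform_diff_smult[of _ "2*n"])
  finally show ?thesis by simp
qed

lemma williamson_dual_witness:
  assumes wil: "williamson n V S d" and V: "V \<in> carrier_mat (2*n) (2*n)" and j: "j < n"
  shows "\<exists>W. psd (2*n) W \<and> mtrace (W * (\<i> \<cdot>\<^sub>m cmat (Omega n))) = 1 \<and>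
    mtrace (W * cmat V) = complex_of_real (d j)"
proof -
  obtain u where u: "u \<in> carrier_vec (2*n)" "qform (cmat V) u = 2 * complex_of_real (d j)"
    "qform (cmat (Omega n)) u = - 2 * \<i>"
    using williamson_witness[OF wil V j] .
  let ?W = "complex_of_real (1/2) \<cdot>\<^sub>m outer_prod u"
  have W: "?W \<in> carrier_mat (2*n) (2*n)" using u(1) by simp
  have "psd (2*n) ?W"
    using psd_smult[OF psd_outer_prod[OF u(1)], of "1/2"] by simp
  moreover have "mtrace (?W * (\<i> \<cdot>\<^sub>m cmat (Omega n))) = \<i> * mtrace (?W * cmat (Omega n))"
    using W Omega_carrier[of n]
    by (simp add: mult_smult_distrib[of _ "2*n" "2*n"] mtrace_smult[of _ "2*n"])
  then have "mtrace (?W * (\<i> \<cdot>\<^sub>m cmat (Omega n))) = 1"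
    using u Omega_carrier[of n] by (simp add: mtrace_smult_outer_prod_mult)
  moreover have "mtrace (?W * cmat V) = complex_of_real (d j)"
    using u V by (simp add: mtrace_smult_outer_prod_mult)
  ultimately show ?thesis by blast
qed

lemma williamson_dual_bound:
  assumes wil: "williamson n V S d" and V: "V \<in> carrier_mat (2*n) (2*n)"
    and W: "psd (2*n) W" "mtrace (W * (\<i> \<cdot>\<^sub>m cmat (Omega n))) = 1"
    "mtrace (W * cmat V) = complex_of_real x"
    and nu: "0 \<le> nu" "\<forall>j<n. nu \<le> d j"
  shows "nu \<le> x"
proof -
  have Wc: "W \<in> carrier_mat (2*n) (2*n)" using W(1) by (simp add: psd_def hermitian_def)
  have "\<i> * mtrace (W * cmat (Omega n)) = 1"
    using W(2) Wc Omega_carrier[of n]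
    by (simp add: mult_smult_distrib[of _ "2*n" "2*n"] mtrace_smult[of _ "2*n"])
  moreover have "nu * Re (\<i> * mtrace (W * cmat (Omega n))) \<le> Re (mtrace (W * cmat V))"
    using W(1) by (intro williamson_trace_bound[OF wil V _ nu]) (simp add: psd_iff_hermitian_nonneg_form)
  ultimately show ?thesis
    using W(3) by simp
qed

theorem propositionA6:
  fixes n :: nat and V S :: "real mat" and d :: "nat \<Rightarrow> real"
  assumes "n > 0"
    and "real_sym_posdef (2*n) V"
    and "williamson n V S d"
  shows "(let nu = Min (d ` {..<n});
              A = {l::real. l \<ge> 0 \<and>
                     psd (2*n) (cmat V - (\<i> * complex_of_real l) \<cdot>\<^sub>m cmat (Omega n))};
              B = {x::real. \<exists>W. psd (2*n) W \<and>
                     mtrace (W * (\<i> \<cdot>\<^sub>m cmat (Omega n))) = 1 \<and>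
                     mtrace (W * cmat V) = complex_of_real x}
          in (nu \<in> A \<and> (\<forall>l\<in>A. l \<le> nu)) \<and> (nu \<in> B \<and> (\<forall>x\<in>B. nu \<le> x)))"
proof -
  define nu where "nu = Min (d ` {..<n})"
  have V: "V \<in> carrier_mat (2*n) (2*n)" "transpose_mat V = V"
    using assms(2) by (auto simp: real_sym_posdef_def)
  have fin: "finite (d ` {..<n})" "d ` {..<n} \<noteq> {}" using assms(1) by auto
  obtain j0 where j0: "j0 < n" "d j0 = nu" using Min_in[OF fin] by (auto simp: nu_def)
  have nu_le: "\<forall>j<n. nu \<le> d j" using fin by (auto simp: nu_def)
  have nu_nonneg: "0 \<le> nu" using assms(3) j0 by (auto simp: williamson_def less_imp_le)
  note nu_nonneg psd_minus_i_smult_Omega[OF assms(3) V nu_nonneg nu_le]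
    psd_minus_i_smult_Omega_imp_le[OF assms(3) V(1) _ j0(1)]
    williamson_dual_witness[OF assms(3) V(1) j0(1)]
    williamson_dual_bound[OF assms(3) V(1) _ _ _ nu_nonneg nu_le]
  then show ?thesis
    unfolding Let_def nu_def[symmetric] j0(2) by blast
qed

end
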